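(* Let $n \ge r \ge 1$, let $\bm U^\star \in \mathbb{R}^{n\times r}$ have rows $\bm u_1^\star,\dots,\bm u_n^\star\in\mathbb{R}^r$, let $\bm M = \bm U^\star\bm U^{\star T}$ (noiseless case), let $\Omega = \{(i,j)\in[n]\times[n]: m_{ij}\ge 0\}$, and let $F(\bm U) = \frac14\|(\bm U\bm U^T - \bm M)_\Omega\|_F^2$ for $\bm U\in\mathbb{R}^{n\times r}$. Let $\mathcal{C}_1,\dots,\mathcal{C}_{2^r}$ be the orthants of $\mathbb{R}^r$, ordered so that consecutive orthants $\mathcal{C}_i,\mathcal{C}_{i+1}$ have sign patterns differing in exactly one coordinate. Suppose $[n]$ is partitioned into $J_1,\dots,J_{2^r}$ with $\bm u_k^\star\in\mathcal{C}_i$ for all $k\in J_i$, let $\bm U_i^\star$ be the submatrix of rows of $\bm U^\star$ indexed by $J_i$, and assume: (1) $\mathrm{rank}(\bm U_i^\star)=r$ for all $i\in[2^r]$; (2) for every $i\in[2^r-1]$, with $\Omega_{i+1,i}=\{(k,l)\in J_{i+1}\times J_i: \bm u_k^{\star T}\bm u_l^\star\ge 0\}$, we have $|\Omega_{i+1,i}|\ge r^2$ and $\mathrm{span}\{\bm u_k^\star\bm u_l^{\star T}:(k,l)\in\Omega_{i+1,i}\} = \mathbb{R}^{r\times r}$. Define $$\gamma := \min\left\{ \|(\bm U^\star\bm D^T + \bm D\bm U^{\star T})_\Omega\|_F^2 \;:\; \bm D\in\mathcal{S}^\perp_{\bm U^\star},\ \|\bm D\|_F = 1\right\}.$$ Then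 $\gamma>0$, and $F$ is geodesically strongly convex on the quotient manifold $\mathcal{M}$ at $[\bm U^\star]$: for every tangent vector $\bm\xi\in \mathrm{T}_{[\bm U^\star]}\mathcal{M}$, $$\mathrm{Hess}\,F([\bm U^\star])[\bm\xi,\bm\xi] \ge \frac{\gamma}{2}\,\|\mathrm{lift}_{\bm U^\star}(\bm\xi)\|_F^2,$$ equivalently $\nabla^2F(\bm U^\star)[\bm D,\bm D]\ge \frac{\gamma}{2}\|\bm D\|_F^2$ for every $\bm D\in\mathcal{S}^\perp_{\bm U^\star}$.
   Context: $(\bm A)_\Omega$ keeps the entries of $\bm A$ in $\Omega$ and zeroes the rest. The quotient manifold is $\mathcal{M}=\mathbb{R}^{n\times r}/\sim$, where $\bm V\sim\bm U$ iff $\bm V=\bm U\bm Q$ for some orthogonal $\bm Q\in\mathbb{R}^{r\times r}$; $[\bm U]$ is the equivalence class. The vertical space at $\bm U$ is $\mathcal{S}_{\bm U}=\{\bm U\bm R: \bm R\in\mathbb{R}^{r\times r},\ \bm R+\bm R^T=\bm 0\}$ and the horizontal space is its orthogonal complement $\mathcal{S}^\perp_{\bm U}=\{\bm D\in\mathbb{R}^{n\times r}: \bm U^T\bm D = \bm D^T\bm U\}$. The map $\mathrm{lift}_{\bm U}:\mathrm{T}_{[\bm U]}\mathcal{M}\to\mathcal{S}^\perp_{\bm U}$ is the standard bijection between tangent vectors of the quotient and horizontal vectors, and the Riemannian Hessian is given by $\mathrm{Hess}\,F([\bm U])[\bm\xi,\bm\xi] = \nabla^2F(\bm U)[\mathrm{lift}_{\bm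 U}(\bm\xi),\mathrm{lift}_{\bm U}(\bm\xi)]$, where $\nabla^2F(\bm U)[\bm D,\bm D]$ is the Euclidean Hessian quadratic form of $F$ at $\bm U$ in direction $\bm D$. *)

theory Defs
  imports "HOL-Analysis.Analysis"
begin

text \<open>Matrices in R^(n x r) are rendered as real^'r^'n (rows U$k :: real^'r).
  The norm on real^'r^'n is the Frobenius norm.\<close>

definition mask :: "('n \<times> 'm) set \<Rightarrow> real^'m^'n \<Rightarrow> real^'m^'n" where
  "mask \<Omega> A = (\<chi> i j. if (i, j) \<in> \<Omega> then A $ i $ j else 0)"

definition obs_set :: "real^'n^'n \<Rightarrow> ('n \<times> 'n) set" where
  "obs_set M = {(i, j). M $ i $ j \<ge> 0}"

definition objF :: "real^'n^'n \<Rightarrow> real^'r^'n \<Rightarrow> real" where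
  "objF M U = (1/4) * (norm (mask (obs_set M) (U ** transpose U - M)))\<^sup>2"

definition hess_quad :: "('a::real_vector \<Rightarrow> real) \<Rightarrow> 'a \<Rightarrow> 'a \<Rightarrow> real" where
  "hess_quad F U D = deriv (deriv (\<lambda>t. F (U + t *\<^sub>R D))) 0"

definition horizontal :: "real^'r^'n \<Rightarrow> (real^'r^'n) set" where
  "horizontal U = {D. transpose U ** D = transpose D ** U}"

definition orthant :: "('r \<Rightarrow> bool) \<Rightarrow> (real^'r) set" where
  "orthant s = {x. \<forall>j. if s j then 0 \<le> x $ j else x $ j \<le> 0}"

definition outer :: "real^'r \<Rightarrow> real^'r \<Rightarrow> real^'r^'r" where
  "outer u v = (\<chi> a b. u $ a * v $ b)"

definition gamma_const :: "real^'r^'n \<Rightarrow> real" where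
  "gamma_const U = Inf ((\<lambda>D. (norm (mask (obs_set (U ** transpose U))
        (U ** transpose D + D ** transpose U)))\<^sup>2) ` {D \<in> horizontal U. norm D = 1})"

end

theory Submission
  imports Defs
begin

text \<open>Since \<open>M = U U\<^sup>T\<close>, the residual vanishes at \<open>U\<close>, so the Hessian in direction
  \<open>D\<close> is half the squared norm of the masked linearisation \<open>(U D\<^sup>T + D U\<^sup>T)\<^sub>\<Omega>\<close>.
  It therefore suffices that this linear map is injective on the horizontal space: then
  \<open>\<gamma> > 0\<close> by compactness of the unit sphere of that subspace, and the bound follows by
  homogeneity.

  For injectivity, rows in a common orthant have nonnegative inner products, so \<open>\<Omega>\<close>
  contains every \<open>J\<^sub>i \<times> J\<^sub>i\<close>; as the rows of \<open>U\<^sub>i\<close> span \<open>\<real>\<^sup>r\<close>, a vanishing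
  linearisation forces \<open>d\<^sub>k = S\<^sub>i u\<^sub>k\<close> on \<open>J\<^sub>i\<close> for a skew matrix \<open>S\<^sub>i\<close>. The outer
  products over \<open>\<Omega>\<^sub>i\<^sub>+\<^sub>1\<^sub>,\<^sub>i\<close> span all matrices, which forces \<open>S\<^sub>i\<^sub>+\<^sub>1 = S\<^sub>i\<close>. Hence
  \<open>D = U S\<^sup>T\<close> is vertical, and a vector that is both vertical and horizontal is zero.\<close>

lemma matrix_mul_transpose_nth: "(A ** transpose B) $ k $ l = A $ k \<bullet> (B $ l :: real^'r)"
  by (simp add: matrix_matrix_mult_def transpose_def inner_vec_def)

lemma transpose_matrix_mul_nth: "(transpose A ** B) $ a $ b = (\<Sum>k\<in>UNIV. A $ k $ a * (B $ k $ b :: real))"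
  by (simp add: matrix_matrix_mult_def transpose_def)

lemma inner_outer: "outer u v \<bullet> A = u \<bullet> (A *v v)"
  unfolding outer_def inner_vec_def matrix_vector_mult_def
  by (auto intro!: sum.cong simp: sum_distrib_left mult_ac)

lemma orthant_inner_nonneg:
  assumes "u \<in> orthant s" "v \<in> orthant s"
  shows "0 \<le> u \<bullet> v"
  unfolding inner_vec_def
proof (rule sum_nonneg)
  fix j
  show "0 \<le> u $ j \<bullet> v $ j"
    using assms unfolding orthant_def inner_real_def
    by (cases "s j") (auto intro: mult_nonneg_nonneg mult_nonpos_nonpos)
qed

lemma Inf_norm_sq_unit_sphere_le:
  fixes f :: "'a::real_normed_vector \<Rightarrow> 'b::real_normed_vector"
  assumes "linear f" "subspace H" "x \<in> H"
  shows "Inf ((\<lambda>y. (norm (f y))\<^sup>2) ` {y \<in> H. norm y = 1}) * (norm x)\<^sup>2 \<le> (norm (f x))\<^sup>2"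
proof (cases "x = 0")
  case True
  then show ?thesis by simp
next
  case False
  have "x /\<^sub>R norm x \<in> {y \<in> H. norm y = 1}"
    using assms(2,3) False by (simp add: subspace_scale)
  then have "Inf ((\<lambda>y. (norm (f y))\<^sup>2) ` {y \<in> H. norm y = 1}) \<le> (norm (f (x /\<^sub>R norm x)))\<^sup>2"
    by (intro cInf_lower imageI) (auto intro: bdd_belowI[of _ 0])
  also have "\<dots> = (norm (f x))\<^sup>2 / (norm x)\<^sup>2"
    by (simp add: linear_scale[OF assms(1)] power_mult_distrib power_inverse divide_inverse mult.commute)
  finally show ?thesis
    using False by (simp add: pos_le_divide_eq)
qed

lemma Inf_norm_sq_unit_sphere_pos:
  fixes f :: "'a::euclidean_space \<Rightarrow> 'b::real_normed_vector"
  assumes "linear f" "subspace H" "H \<noteq> {0}" and inj: "\<And>x. x \<in> H \<Longrightarrow> f x = 0 \<Longrightarrow> x = 0"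
  shows "0 < Inf ((\<lambda>x. (norm (f x))\<^sup>2) ` {x \<in> H. norm x = 1})"
proof -
  let ?K = "{x \<in> H. norm x = 1}"
  have "?K = H \<inter> sphere 0 1" by auto
  then have K_compact: "compact ?K"
    using closed_subspace[OF assms(2)] by (simp add: closed_Int_compact)
  obtain x where "x \<in> H" "x \<noteq> 0"
    using assms(3) subspace_0[OF assms(2)] by blast
  then have "x /\<^sub>R norm x \<in> ?K"
    using assms(2) by (simp add: subspace_scale)
  then have K_ne: "?K \<noteq> {}" by blast
  have "continuous_on ?K f"
    using assms(1) by (simp add: linear_continuous_on linear_conv_bounded_linear)
  then have "continuous_on ?K (\<lambda>x. (norm (f x))\<^sup>2)"
    by (intro continuous_on_power continuous_on_norm)
  then obtain x0 where x0: "x0 \<in> ?K" "\<forall>y\<in>?K. (norm (f x0))\<^sup>2 \<le> (norm (f y))\<^sup>2"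
    using continuous_attains_inf[OF K_compact K_ne] by blast
  then have "Inf ((\<lambda>x. (norm (f x))\<^sup>2) ` ?K) = (norm (f x0))\<^sup>2"
    by (intro cInf_eq_minimum) auto
  moreover have "f x0 \<noteq> 0"
  proof
    assume "f x0 = 0"
    then have "x0 = 0" using inj x0(1) by blast
    then show False using x0(1) by simp
  qed
  ultimately show ?thesis by simp
qed

lemma deriv2_at_0_norm_sq_quadratic_path:
  fixes P Q :: "'a::real_inner"
  shows "deriv (deriv (\<lambda>t. c * (norm (t *\<^sub>R P + t\<^sup>2 *\<^sub>R Q))\<^sup>2)) 0 = 2 * c * (norm P)\<^sup>2"
proof -
  define a b e where "a = P \<bullet> P" and "b = P \<bullet> Q" and "e = Q \<bullet> Q"
  have path: "(\<lambda>t. c * (norm (t *\<^sub>R P + t\<^sup>2 *\<^sub>R Q))\<^sup>2)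
      = (\<lambda>t. c * (t\<^sup>2 * a + 2 * t ^ 3 * b + t ^ 4 * e))"
  proof
    fix t :: real
    show "c * (norm (t *\<^sub>R P + t\<^sup>2 *\<^sub>R Q))\<^sup>2 = c * (t\<^sup>2 * a + 2 * t ^ 3 * b + t ^ 4 * e)"
      unfolding power2_norm_eq_inner a_def b_def e_def
      by (simp add: inner_add_left inner_add_right inner_commute algebra_simps
          power2_eq_square power3_eq_cube power4_eq_xxxx)
  qed
  have d1: "deriv (\<lambda>t. c * (t\<^sup>2 * a + 2 * t ^ 3 * b + t ^ 4 * e))
      = (\<lambda>t. c * (2 * t * a + 6 * t\<^sup>2 * b + 4 * t ^ 3 * e))"
  proof
    fix t :: real
    show "deriv (\<lambda>t. c * (t\<^sup>2 * a + 2 * t ^ 3 * b + t ^ 4 * e)) t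
        = c * (2 * t * a + 6 * t\<^sup>2 * b + 4 * t ^ 3 * e)"
      by (rule DERIV_imp_deriv, (rule derivative_eq_intros refl)+)
        (simp add: algebra_simps power2_eq_square power3_eq_cube)
  qed
  have d2: "deriv (\<lambda>t. c * (2 * t * a + 6 * t\<^sup>2 * b + 4 * t ^ 3 * e)) 0 = 2 * c * a"
    by (rule DERIV_imp_deriv, (rule derivative_eq_intros refl)+) simp
  show ?thesis
    unfolding path d1 d2 by (simp add: a_def power2_norm_eq_inner)
qed

lemma linear_mask: "linear (mask \<Omega>)"
  by (rule linearI) (simp_all add: mask_def vec_eq_iff)

lemma hess_quad_objF_at_root:
  fixes U D :: "real^'r^'n"
  shows "hess_quad (objF (U ** transpose U)) U D
    = (norm (mask (obs_set (U ** transpose U)) (U ** transpose D + D ** transpose U)))\<^sup>2 / 2"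
proof -
  let ?\<Omega> = "obs_set (U ** transpose U)"
  have "(U + t *\<^sub>R D) ** transpose (U + t *\<^sub>R D) - U ** transpose U
      = t *\<^sub>R (U ** transpose D + D ** transpose U) + t\<^sup>2 *\<^sub>R (D ** transpose D)" for t
    by (simp add: vec_eq_iff matrix_mul_transpose_nth inner_add_left inner_add_right
        algebra_simps power2_eq_square inner_commute)
  then have path: "(\<lambda>t. objF (U ** transpose U) (U + t *\<^sub>R D))
      = (\<lambda>t. 1/4 * (norm (t *\<^sub>R mask ?\<Omega> (U ** transpose D + D ** transpose U)
                           + t\<^sup>2 *\<^sub>R mask ?\<Omega> (D ** transpose D)))\<^sup>2)"
    by (simp add: objF_def linear_add[OF linear_mask] linear_scale[OF linear_mask])
  show ?thesis
    unfolding hess_quad_def path deriv2_at_0_norm_sq_quadratic_path by simp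
qed

lemma subspace_horizontal: "subspace (horizontal U)"
proof -
  have "linear (\<lambda>D. transpose U ** D - transpose D ** U)"
    by (rule linearI) (simp_all add: vec_eq_iff transpose_matrix_mul_nth sum.distrib
        sum_distrib_left algebra_simps sum_subtractf)
  then have "subspace {D. transpose U ** D - transpose D ** U = 0}"
    by (rule linear_subspace_kernel)
  then show ?thesis
    by (simp add: horizontal_def)
qed

lemma self_mem_horizontal: "U \<in> horizontal U"
  by (simp add: horizontal_def)

lemma linear_masked_sym_product:
  "linear (\<lambda>D. mask \<Omega> (U ** transpose D + D ** transpose U))"
  by (rule linearI) (simp_all add: vec_eq_iff mask_def matrix_mul_transpose_nth
      inner_add_left inner_add_right ring_distribs)

lemma mask_sym_product_eq_0_iff:
  "mask (obs_set (U ** transpose U)) (U ** transpose D + D ** transpose U) = 0 \<longleftrightarrow>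
     (\<forall>k l. 0 \<le> U $ k \<bullet> U $ l \<longrightarrow> U $ k \<bullet> D $ l + D $ k \<bullet> U $ l = 0)"
  by (auto simp: vec_eq_iff mask_def obs_set_def matrix_mul_transpose_nth inner_commute)

lemma rows_full_rank_imp_nonzero:
  fixes U :: "real^'r^'n"
  assumes "dim (span ((\<lambda>k. U $ k) ` A)) = CARD('r)"
  shows "U \<noteq> 0"
proof
  assume "U = 0"
  then have "(\<lambda>k. U $ k) ` A \<subseteq> {0}" by auto
  then have "dim (span ((\<lambda>k. U $ k) ` A)) = 0"
    by (simp add: dim_span dim_eq_0)
  with assms show False by simp
qed

definition skew :: "real^'r^'r \<Rightarrow> bool" where
  "skew S \<longleftrightarrow> (\<forall>x y. (S *v x) \<bullet> y + x \<bullet> (S *v y) = 0)"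

lemma skew_nth:
  assumes "skew S"
  shows "S $ a $ b = - S $ b $ a"
proof -
  have "(S *v axis b 1) \<bullet> axis a 1 + axis b 1 \<bullet> (S *v axis a 1) = 0"
    using assms by (simp add: skew_def)
  moreover have "(S *v axis j 1) $ i = S $ i $ j" for i j
    by (metis cart_eq_inner_axis matrix_vector_mul_component)
  ultimately show ?thesis by (simp add: inner_axis inner_axis')
qed

lemma skew_factor_of_spanning_family:
  fixes u d :: "'n \<Rightarrow> real^'r"
  assumes span_u: "span (u ` J) = UNIV"
    and sym0: "\<And>k l. k \<in> J \<Longrightarrow> l \<in> J \<Longrightarrow> u k \<bullet> d l + d k \<bullet> u l = 0"
  obtains S where "skew S" "\<And>k. k \<in> J \<Longrightarrow> d k = S *v u k"
proof -
  obtain B where B: "B \<subseteq> u ` J" "independent B" "u ` J \<subseteq> span B"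
    by (rule basis_exists)
  have span_B: "span B = UNIV"
    using span_u B(3) span_minimal[OF B(3) subspace_span] by auto
  have "\<forall>b\<in>B. \<exists>k\<in>J. u k = b" using B(1) by blast
  then obtain pre where pre: "\<And>b. b \<in> B \<Longrightarrow> pre b \<in> J \<and> u (pre b) = b" by metis
  obtain g where g: "linear g" "\<forall>b\<in>B. g b = d (pre b)"
    using linear_independent_extend[OF B(2), of "\<lambda>b. d (pre b)"] by blast
  have "bilinear (\<lambda>x y. g x \<bullet> y + x \<bullet> g y)"
    unfolding bilinear_def linear_iff using g(1)
    by (simp add: linear_add linear_scale inner_add_left inner_add_right algebra_simps)
  then have g_skew: "g x \<bullet> y + x \<bullet> g y = 0" for x y
  proof (rule bilinear_eq[where g = "\<lambda>_ _. 0" and B = B and C = B and S = UNIV and T = UNIV])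
    show "bilinear (\<lambda>_ _. 0 :: real)"
      by (simp add: bilinear_def linear_zero)
    fix x y assume "x \<in> B" "y \<in> B"
    then have "g x \<bullet> y + x \<bullet> g y = u (pre x) \<bullet> d (pre y) + d (pre x) \<bullet> u (pre y)"
      using g(2) pre by (simp add: add.commute)
    also have "\<dots> = 0"
      using sym0 pre \<open>x \<in> B\<close> \<open>y \<in> B\<close> by blast
    finally show "g x \<bullet> y + x \<bullet> g y = 0" .
  qed (simp_all add: span_B)
  have d_eq: "d k = g (u k)" if "k \<in> J" for k
  proof -
    have "orthogonal (d k - g (u k)) b" if "b \<in> B" for b
      using sym0[OF \<open>k \<in> J\<close>, of "pre b"] g_skew[of "u k" b] g(2) pre[OF that] that
      by (simp add: orthogonal_def inner_diff_right inner_commute)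
    then have "orthogonal (d k - g (u k)) (d k - g (u k))"
      using orthogonal_to_span span_B by blast
    then show ?thesis by (simp add: orthogonal_def)
  qed
  have "matrix g *v x = g x" for x
    using fun_cong[OF matrix_vector_mul(2)[OF g(1)], of x] by simp
  then show thesis
    by (intro that[of "matrix g"]) (simp_all add: skew_def g_skew d_eq)
qed

lemma matrix_eq_if_outer_forms_eq:
  fixes S T :: "real^'r^'r" and u :: "'n \<Rightarrow> real^'r"
  assumes span_X: "span ((\<lambda>(k, l). outer (u k) (u l)) ` X) = UNIV"
    and forms_eq: "\<And>k l. (k, l) \<in> X \<Longrightarrow> u k \<bullet> (S *v u l) = u k \<bullet> (T *v u l)"
  shows "S = T"
proof -
  have "orthogonal (S - T) A" if "A \<in> (\<lambda>(k, l). outer (u k) (u l)) ` X" for A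
    using that forms_eq
    by (auto simp: orthogonal_def inner_commute[of "S - T"] inner_outer
        matrix_vector_mult_diff_rdistrib inner_diff_right)
  then have "orthogonal (S - T) (S - T)"
    using orthogonal_to_span span_X by blast
  then show ?thesis by (simp add: orthogonal_def)
qed

lemma skew_factors_eq_on_outer_span:
  fixes S T :: "real^'r^'r" and u d :: "'n \<Rightarrow> real^'r"
  assumes "skew S"
    and span_X: "span ((\<lambda>(k, l). outer (u k) (u l)) ` X) = UNIV"
    and dS: "\<And>k l. (k, l) \<in> X \<Longrightarrow> d k = S *v u k"
    and dT: "\<And>k l. (k, l) \<in> X \<Longrightarrow> d l = T *v u l"
    and sym0: "\<And>k l. (k, l) \<in> X \<Longrightarrow> u k \<bullet> d l + d k \<bullet> u l = 0"
  shows "S = T"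
proof (rule matrix_eq_if_outer_forms_eq[OF span_X])
  fix k l assume "(k, l) \<in> X"
  moreover have "(S *v u k) \<bullet> u l + u k \<bullet> (S *v u l) = 0"
    using \<open>skew S\<close> by (simp add: skew_def)
  ultimately show "u k \<bullet> (S *v u l) = u k \<bullet> (T *v u l)"
    using dS dT sym0 by (metis add.commute add_left_cancel)
qed

lemma horizontal_skew_factor_eq_0:
  fixes U D :: "real^'r^'n" and S :: "real^'r^'r"
  assumes hor: "D \<in> horizontal U"
    and "skew S"
    and D_eq: "\<And>k. D $ k = S *v U $ k"
  shows "D = 0"
proof -
  \<comment> \<open>\<open>\<parallel>D\<parallel>\<^sup>2 = tr (S H)\<close> with \<open>S\<close> skew and \<open>H = U\<^sup>T D\<close> symmetric, hence zero.\<close>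
  define H where "H = transpose U ** D"
  have H_sym: "H $ b $ a = H $ a $ b" for a b
  proof -
    have "H = transpose D ** U" using hor unfolding horizontal_def H_def by simp
    then have "H $ b $ a = (\<Sum>k\<in>UNIV. D $ k $ b * U $ k $ a)"
      by (simp add: transpose_matrix_mul_nth)
    also have "\<dots> = H $ a $ b"
      unfolding H_def transpose_matrix_mul_nth by (simp add: mult.commute)
    finally show ?thesis .
  qed
  define T where "T = (\<Sum>a\<in>UNIV. \<Sum>b\<in>UNIV. S $ a $ b * H $ b $ a)"
  have "D \<bullet> D = (\<Sum>k\<in>UNIV. (S *v U $ k) \<bullet> D $ k)"
    using D_eq by (simp add: inner_vec_def)
  also have "\<dots> = (\<Sum>k\<in>UNIV. \<Sum>a\<in>UNIV. \<Sum>b\<in>UNIV. S $ a $ b * U $ k $ b * D $ k $ a)"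
    by (simp add: inner_vec_def matrix_vector_mult_def sum_distrib_right)
  also have "\<dots> = (\<Sum>a\<in>UNIV. \<Sum>b\<in>UNIV. \<Sum>k\<in>UNIV. S $ a $ b * U $ k $ b * D $ k $ a)"
    by (subst sum.swap) (rule sum.cong[OF refl], rule sum.swap)
  also have "\<dots> = T"
    unfolding T_def H_def transpose_matrix_mul_nth by (simp add: sum_distrib_left mult.assoc)
  finally have DD: "D \<bullet> D = T" .
  have swap: "S $ a $ b * H $ b $ a = - (S $ b $ a * H $ a $ b)" for a b
    using skew_nth[OF \<open>skew S\<close>, of a b] H_sym[of a b] by simp
  have "T = (\<Sum>b\<in>UNIV. \<Sum>a\<in>UNIV. S $ a $ b * H $ b $ a)"
    unfolding T_def by (rule sum.swap)
  also have "\<dots> = (\<Sum>b\<in>UNIV. \<Sum>a\<in>UNIV. - (S $ b $ a * H $ a $ b))"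
    by (intro sum.cong refl) (rule swap)
  also have "\<dots> = - T"
    unfolding T_def by (simp only: sum_negf)
  finally have "T = 0" by simp
  with DD show ?thesis by simp
qed

lemma horizontal_eq_0_if_sym_product_vanishes:
  fixes U D :: "real^'r^'n" and sgn :: "nat \<Rightarrow> 'r \<Rightarrow> bool" and J :: "nat \<Rightarrow> 'n set"
  assumes cover: "(\<Union>i<N. J i) = UNIV"
    and in_orth: "\<forall>i<N. \<forall>k\<in>J i. U $ k \<in> orthant (sgn i)"
    and rank: "\<forall>i<N. dim (span ((\<lambda>k. U $ k) ` J i)) = CARD('r)"
    and span_cross: "\<forall>i. Suc i < N \<longrightarrow>
        span ((\<lambda>(k, l). outer (U $ k) (U $ l)) `
          {(k, l). k \<in> J (Suc i) \<and> l \<in> J i \<and> U $ k \<bullet> U $ l \<ge> 0}) = UNIV"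
    and hor: "D \<in> horizontal U"
    and sym0: "\<forall>k l. 0 \<le> U $ k \<bullet> U $ l \<longrightarrow> U $ k \<bullet> D $ l + D $ k \<bullet> U $ l = 0"
  shows "D = 0"
proof -
  have "\<exists>S. skew S \<and> (\<forall>k\<in>J i. D $ k = S *v U $ k)" if "i < N" for i
  proof -
    have "dim ((\<lambda>k. U $ k) ` J i) = DIM(real^'r)" using rank \<open>i < N\<close> by simp
    then have "span ((\<lambda>k. U $ k) ` J i) = UNIV" using dim_eq_full by blast
    moreover have "U $ k \<bullet> D $ l + D $ k \<bullet> U $ l = 0" if "k \<in> J i" "l \<in> J i" for k l
      using in_orth \<open>i < N\<close> that sym0 orthant_inner_nonneg by blast
    ultimately show ?thesis
      by (metis skew_factor_of_spanning_family)
  qed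
  then obtain S where S: "\<And>i. i < N \<Longrightarrow> skew (S i) \<and> (\<forall>k\<in>J i. D $ k = S i *v U $ k)"
    by metis
  have S_const: "S i = S 0" if "i < N" for i
    using that
  proof (induction i)
    case (Suc i)
    have "S (Suc i) = S i"
      by (rule skew_factors_eq_on_outer_span[where u = "\<lambda>k. U $ k" and d = "\<lambda>k. D $ k"])
        (use S[of i] S[of "Suc i"] Suc.prems span_cross sym0 in auto)
    with Suc show ?case by simp
  qed simp
  have "D $ k = S 0 *v U $ k" for k
    using cover S S_const by (metis UNIV_I UN_E lessThan_iff)
  moreover have "0 < N" using cover by (metis UNIV_I UN_E lessThan_iff gr_zeroI not_less0)
  ultimately show ?thesis
    using horizontal_skew_factor_eq_0[OF hor] S by blast
qed

theorem theorem3p5: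
  fixes Ustar :: "real^'r^'n"
    and sgn :: "nat \<Rightarrow> 'r \<Rightarrow> bool"
    and J :: "nat \<Rightarrow> 'n set"
  defines "N \<equiv> (2::nat) ^ CARD('r)"
  assumes nr: "CARD('r) \<le> CARD('n)"
    and orth_enum: "bij_betw sgn {..<N} UNIV"
    and gray: "\<forall>i. Suc i < N \<longrightarrow> card {j. sgn (Suc i) j \<noteq> sgn i j} = 1"
    and disj: "\<forall>i<N. \<forall>i'<N. i \<noteq> i' \<longrightarrow> J i \<inter> J i' = {}"
    and cover: "(\<Union>i<N. J i) = UNIV"
    and in_orth: "\<forall>i<N. \<forall>k\<in>J i. Ustar $ k \<in> orthant (sgn i)"
    and rank: "\<forall>i<N. dim (span ((\<lambda>k. Ustar $ k) ` J i)) = CARD('r)"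
    and card_cross: "\<forall>i. Suc i < N \<longrightarrow>
        card {(k, l). k \<in> J (Suc i) \<and> l \<in> J i \<and> Ustar $ k \<bullet> Ustar $ l \<ge> 0} \<ge> CARD('r)^2"
    and span_cross: "\<forall>i. Suc i < N \<longrightarrow>
        span ((\<lambda>(k, l). outer (Ustar $ k) (Ustar $ l)) `
          {(k, l). k \<in> J (Suc i) \<and> l \<in> J i \<and> Ustar $ k \<bullet> Ustar $ l \<ge> 0}) = UNIV"
  shows "gamma_const Ustar > 0 \<and>
         (\<forall>D \<in> horizontal Ustar.
            hess_quad (objF (Ustar ** transpose Ustar)) Ustar D
              \<ge> gamma_const Ustar / 2 * (norm D)\<^sup>2)"
proof -
  define f where "f D = mask (obs_set (Ustar ** transpose Ustar))
    (Ustar ** transpose D + D ** transpose Ustar)" for D :: "real^'r^'n"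
  have gamma: "gamma_const Ustar = Inf ((\<lambda>D. (norm (f D))\<^sup>2) ` {D \<in> horizontal Ustar. norm D = 1})"
    unfolding gamma_const_def f_def ..
  have hess: "hess_quad (objF (Ustar ** transpose Ustar)) Ustar D = (norm (f D))\<^sup>2 / 2" for D
    unfolding f_def by (rule hess_quad_objF_at_root)
  have "linear f"
    unfolding f_def by (rule linear_masked_sym_product)
  have ker: "D = 0" if "D \<in> horizontal Ustar" "f D = 0" for D
  proof (rule horizontal_eq_0_if_sym_product_vanishes[OF cover in_orth rank span_cross \<open>D \<in> _\<close>])
    show "\<forall>k l. 0 \<le> Ustar $ k \<bullet> Ustar $ l \<longrightarrow> Ustar $ k \<bullet> D $ l + D $ k \<bullet> Ustar $ l = 0"
      using \<open>f D = 0\<close> unfolding f_def mask_sym_product_eq_0_iff .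
  qed
  have "Ustar \<noteq> 0"
    using rank by (intro rows_full_rank_imp_nonzero[of Ustar "J 0"]) (simp add: N_def)
  then have "horizontal Ustar \<noteq> {0}"
    using self_mem_horizontal by blast
  show ?thesis
  proof (intro conjI ballI)
    show "gamma_const Ustar > 0"
      unfolding gamma using \<open>linear f\<close> subspace_horizontal \<open>horizontal Ustar \<noteq> {0}\<close> ker
      by (rule Inf_norm_sq_unit_sphere_pos)
    fix D assume "D \<in> horizontal Ustar"
    then show "hess_quad (objF (Ustar ** transpose Ustar)) Ustar D \<ge> gamma_const Ustar / 2 * (norm D)\<^sup>2"
      unfolding hess gamma using Inf_norm_sq_unit_sphere_le[OF \<open>linear f\<close> subspace_horizontal] by simp
  qed
qed

end
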